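(* Let $G$ be a graph with no induced $P_7$, $C_4$, $C_6$ or $C_7$, let $H=(B_1,\dots,B_5)$ be a maximal nice blowup of $C_5$ in $G$, and for each $j$ let $q_j$ be a fixed vertex of $B_j$ complete to $B_{j-1}\cup B_{j+1}$. Let $i\in\{1,\dots,5\}$, let $x\in A_3(i)$, and suppose $B_i\setminus N(x)$ is anticomplete to $N_{B_{i+1}}(x)$. Then: (1) $q_i\in N_{B_i}(x)$ and $q_{i+1}\in B_{i+1}\setminus N(x)$; (2) $N_{B_i}(x)$ is complete to $N_{B_j}(x)$ for $j\in\{i-1,i+1\}$; (3) for any $a\in B_i\setminus N(x)$ and $b\in N_{B_i}(x)$, $N_{B_{i-1}\cup B_{i+1}}(a)\subsetneq N_{B_{i-1}\cup B_{i+1}}(b)$; (4) for any $a\in B_{i-1}\setminus N(x)$ and $b\in N_{B_{i-1}}(x)$, $N_{B_{i-2}\cup B_i}(a)\subseteq N_{B_{i-2}\cup B_i}(b)$; consequently there is a vertex in $N_{B_{i-1}}(x)$ complete to $B_{i-2}\cup B_i$.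
   Context: Indices modulo $5$. A nice blowup of $C_5$ is a tuple $(B_1,\dots,B_5)$ of pairwise disjoint cliques such that every vertex of $B_j$ has a neighbor in $B_{j-1}$ and in $B_{j+1}$, $B_j$ is anticomplete to $B_{j+2}$, and there are no $a\in B_j$, distinct $b,c\in B_{j+1}$, $d\in B_{j+2}$ with $G[\{a,b,c,d\}]\cong P_4$; $V(H)=\bigcup B_j$; maximal means no nice blowup has vertex set strictly containing $V(H)$. (Such vertices $q_j$ exist.) For $v\notin V(H)$, $\operatorname{supp}(v)$ is the set of $j$ such that $v$ has a neighbor in $B_j$; $A_3(i)=\{v\notin V(H):\operatorname{supp}(v)=\{i-1,i,i+1\}\}$. $N(x)$ is the neighborhood of $x$ and $N_S(x)=N(x)\cap S$. *)

theory Defs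
  imports Main
begin

definition graph :: "'a set \<Rightarrow> ('a \<Rightarrow> 'a \<Rightarrow> bool) \<Rightarrow> bool" where
  "graph V E \<longleftrightarrow> finite V \<and> (\<forall>x y. E x y \<longrightarrow> E y x) \<and> (\<forall>x. \<not> E x x)"

definition induced_path :: "('a \<Rightarrow> 'a \<Rightarrow> bool) \<Rightarrow> 'a list \<Rightarrow> bool" where
  "induced_path E xs \<longleftrightarrow> distinct xs \<and>
     (\<forall>i<length xs. \<forall>j<length xs. E (xs!i) (xs!j) \<longleftrightarrow> (i = j + 1 \<or> j = i + 1))"

definition induced_cycle :: "('a \<Rightarrow> 'a \<Rightarrow> bool) \<Rightarrow> 'a list \<Rightarrow> bool" where
  "induced_cycle E xs \<longleftrightarrow> distinct xs \<and>
     (\<forall>i<length xs. \<forall>j<length xs. E (xs!i) (xs!j) \<longleftrightarrow>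
         (i = (j + 1) mod length xs \<or> j = (i + 1) mod length xs))"

definition has_induced_P :: "'a set \<Rightarrow> ('a \<Rightarrow> 'a \<Rightarrow> bool) \<Rightarrow> nat \<Rightarrow> bool" where
  "has_induced_P V E k \<longleftrightarrow> (\<exists>xs. set xs \<subseteq> V \<and> length xs = k \<and> induced_path E xs)"

definition has_induced_C :: "'a set \<Rightarrow> ('a \<Rightarrow> 'a \<Rightarrow> bool) \<Rightarrow> nat \<Rightarrow> bool" where
  "has_induced_C V E k \<longleftrightarrow> (\<exists>xs. set xs \<subseteq> V \<and> length xs = k \<and> induced_cycle E xs)"

definition induces_P4 :: "('a \<Rightarrow> 'a \<Rightarrow> bool) \<Rightarrow> 'a set \<Rightarrow> bool" where
  "induces_P4 E S \<longleftrightarrow> (\<exists>xs. set xs = S \<and> length xs = 4 \<and> induced_path E xs)"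

definition clique :: "('a \<Rightarrow> 'a \<Rightarrow> bool) \<Rightarrow> 'a set \<Rightarrow> bool" where
  "clique E S \<longleftrightarrow> (\<forall>x\<in>S. \<forall>y\<in>S. x \<noteq> y \<longrightarrow> E x y)"

definition complete :: "('a \<Rightarrow> 'a \<Rightarrow> bool) \<Rightarrow> 'a set \<Rightarrow> 'a set \<Rightarrow> bool" where
  "complete E S T \<longleftrightarrow> (\<forall>x\<in>S. \<forall>y\<in>T. E x y)"

definition anticomplete :: "('a \<Rightarrow> 'a \<Rightarrow> bool) \<Rightarrow> 'a set \<Rightarrow> 'a set \<Rightarrow> bool" where
  "anticomplete E S T \<longleftrightarrow> (\<forall>x\<in>S. \<forall>y\<in>T. \<not> E x y)"

definition nbhd :: "'a set \<Rightarrow> ('a \<Rightarrow> 'a \<Rightarrow> bool) \<Rightarrow> 'a \<Rightarrow> 'a set" where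
  "nbhd V E x = {y \<in> V. E x y}"

(* Indices of C_5 are 0..4, arithmetic mod 5. A blowup is B :: nat => 'a set;
   only B 0, ..., B 4 are relevant. *)
definition nice_blowup :: "'a set \<Rightarrow> ('a \<Rightarrow> 'a \<Rightarrow> bool) \<Rightarrow> (nat \<Rightarrow> 'a set) \<Rightarrow> bool" where
  "nice_blowup V E B \<longleftrightarrow>
     (\<forall>j<5. B j \<subseteq> V \<and> clique E (B j)) \<and>
     (\<forall>j<5. \<forall>k<5. j \<noteq> k \<longrightarrow> B j \<inter> B k = {}) \<and>
     (\<forall>j<5. \<forall>v\<in>B j. (\<exists>u\<in>B ((j + 4) mod 5). E v u) \<and> (\<exists>u\<in>B ((j + 1) mod 5). E v u)) \<and>
     (\<forall>j<5. anticomplete E (B j) (B ((j + 2) mod 5))) \<and>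
     (\<forall>j<5. \<not> (\<exists>a\<in>B j. \<exists>b\<in>B ((j + 1) mod 5). \<exists>c\<in>B ((j + 1) mod 5). \<exists>d\<in>B ((j + 2) mod 5).
              b \<noteq> c \<and> induces_P4 E {a, b, c, d}))"

definition VH :: "(nat \<Rightarrow> 'a set) \<Rightarrow> 'a set" where
  "VH B = (\<Union>j<5. B j)"

definition maximal_nice_blowup :: "'a set \<Rightarrow> ('a \<Rightarrow> 'a \<Rightarrow> bool) \<Rightarrow> (nat \<Rightarrow> 'a set) \<Rightarrow> bool" where
  "maximal_nice_blowup V E B \<longleftrightarrow> nice_blowup V E B \<and>
     \<not> (\<exists>B'. nice_blowup V E B' \<and> VH B \<subset> VH B')"

definition supp :: "('a \<Rightarrow> 'a \<Rightarrow> bool) \<Rightarrow> (nat \<Rightarrow> 'a set) \<Rightarrow> 'a \<Rightarrow> nat set" where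
  "supp E B v = {j. j < 5 \<and> (\<exists>u\<in>B j. E v u)}"

definition A3 :: "'a set \<Rightarrow> ('a \<Rightarrow> 'a \<Rightarrow> bool) \<Rightarrow> (nat \<Rightarrow> 'a set) \<Rightarrow> nat \<Rightarrow> 'a set" where
  "A3 V E B i = {v \<in> V - VH B. supp E B v = {(i + 4) mod 5, i mod 5, (i + 1) mod 5}}"

end

theory Submission
  imports Defs
begin

(* Rotating the block indices reduces the theorem to i = 0.  Then x is not complete to B_0:
   otherwise adding x to B_0 would give a larger nice blowup, because in a C_6-free graph a
   P_4 across three consecutive blocks closes into an induced C_6 as soon as one of the two
   remaining blocks has a vertex complete to both of its neighbouring blocks.  A non-neighbour
   of x in B_0 then forces x ~ q_0 and x !~ q_1, and each of the remaining claims fails only in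
   the presence of an induced C_4, an induced C_6, or a P_4 across B_4, B_0, B_1 forbidden by
   niceness. *)

lemma all_less_4: "(\<forall>i<4. P i) \<longleftrightarrow> P 0 \<and> P 1 \<and> P 2 \<and> P (3::nat)"
  by (simp add: numeral_eq_Suc All_less_Suc2)

lemma all_less_5: "(\<forall>i<5. P i) \<longleftrightarrow> P 0 \<and> P 1 \<and> P 2 \<and> P 3 \<and> P (4::nat)"
  by (simp add: numeral_eq_Suc All_less_Suc2)

lemma all_less_6: "(\<forall>i<6. P i) \<longleftrightarrow> P 0 \<and> P 1 \<and> P 2 \<and> P 3 \<and> P 4 \<and> P (5::nat)"
  by (simp add: numeral_eq_Suc All_less_Suc2)

lemma graph_sym: "graph V E \<Longrightarrow> E u v \<longleftrightarrow> E v u"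
  unfolding graph_def by blast

lemma graph_irrefl: "graph V E \<Longrightarrow> \<not> E u u"
  unfolding graph_def by blast

lemma has_induced_C4I:
  assumes "graph V E" "{a, b, c, d} \<subseteq> V" "a \<noteq> c" "b \<noteq> d"
    and "E a b" "E b c" "E c d" "E d a" "\<not> E a c" "\<not> E b d"
  shows "has_induced_C V E 4"
proof -
  have l: "length [a, b, c, d] = 4" by simp
  have "induced_cycle E [a, b, c, d]"
    using assms graph_irrefl[OF \<open>graph V E\<close>] graph_sym[OF \<open>graph V E\<close>]
    unfolding induced_cycle_def l all_less_4 by auto
  then show ?thesis
    unfolding has_induced_C_def using assms(2) by (intro exI[of _ "[a, b, c, d]"]) simp
qed

lemma has_induced_C6I:
  assumes "graph V E" "{a, b, c, d, e, f} \<subseteq> V"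
    and "E a b" "E b c" "E c d" "E d e" "E e f" "E f a"
    and "\<not> E a c" "\<not> E a d" "\<not> E a e" "\<not> E b d" "\<not> E b e" "\<not> E b f"
      "\<not> E c e" "\<not> E c f" "\<not> E d f"
  shows "has_induced_C V E 6"
proof -
  have l: "length [a, b, c, d, e, f] = 6" by simp
  have "induced_cycle E [a, b, c, d, e, f]"
    using assms graph_irrefl[OF \<open>graph V E\<close>] graph_sym[OF \<open>graph V E\<close>]
    unfolding induced_cycle_def l all_less_6 by auto
  then show ?thesis
    unfolding has_induced_C_def using assms(2) by (intro exI[of _ "[a, b, c, d, e, f]"]) simp
qed

lemma induces_P4I:
  assumes "graph V E" "E a b" "E b c" "E c d" "\<not> E a c" "\<not> E b d" "\<not> E a d"
  shows "induces_P4 E {a, b, c, d}"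
proof -
  have l: "length [a, b, c, d] = 4" by simp
  have "induced_path E [a, b, c, d]"
    using assms graph_irrefl[OF \<open>graph V E\<close>] graph_sym[OF \<open>graph V E\<close>]
    unfolding induced_path_def l all_less_4 by auto
  then show ?thesis
    unfolding induces_P4_def by (intro exI[of _ "[a, b, c, d]"]) simp
qed

lemma induces_P4E:
  assumes G: "graph V E" and P: "induces_P4 E {a, b, c, d}" and "E b c" "\<not> E a d"
  obtains "E a b" "E c d" "\<not> E a c" "\<not> E b d"
    | "E a c" "E b d" "\<not> E a b" "\<not> E c d"
proof -
  obtain p0 p1 p2 p3 where set_eq: "{p0, p1, p2, p3} = {a, b, c, d}"
    and path: "induced_path E [p0, p1, p2, p3]"
    using P unfolding induces_P4_def
    by (auto simp: numeral_eq_Suc length_Suc_conv)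
  have l: "length [p0, p1, p2, p3] = 4" by simp
  have distinct: "distinct [p0, p1, p2, p3]"
    and edges: "E p0 p1" "E p1 p2" "E p2 p3" "\<not> E p0 p2" "\<not> E p1 p3" "\<not> E p0 p3"
    using path unfolding induced_path_def l all_less_4 by auto
  have "card {a, b, c, d} = 4"
    using distinct set_eq by (metis distinct_card l list.set(1) list.set(2))
  then have "distinct [a, b, c, d]"
    by (auto simp: card_insert_if split: if_splits)
  moreover have "a \<in> {p0, p1, p2, p3}" "b \<in> {p0, p1, p2, p3}"
    "c \<in> {p0, p1, p2, p3}" "d \<in> {p0, p1, p2, p3}"
    using set_eq by blast+
  ultimately show ?thesis
    using that distinct edges assms(3,4) graph_sym[OF G]
    by (auto; metis)
qed

lemma add_mod_5_inj:
  fixes i j k :: nat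
  assumes "(i + j) mod 5 = (i + k) mod 5" "j < 5" "k < 5"
  shows "j = k"
proof -
  have "j = ((i + j) mod 5 + 4 * i) mod 5" "k = ((i + k) mod 5 + 4 * i) mod 5"
    using assms(2,3) by (simp_all add: mod_simps algebra_simps)
  then show ?thesis
    using assms(1) by simp
qed

definition blowup_frame :: "'a set \<Rightarrow> ('a \<Rightarrow> 'a \<Rightarrow> bool) \<Rightarrow> (nat \<Rightarrow> 'a set) \<Rightarrow> bool" where
  "blowup_frame V E B \<longleftrightarrow>
     (\<forall>j<5. B j \<subseteq> V \<and> clique E (B j)) \<and>
     (\<forall>j<5. \<forall>k<5. j \<noteq> k \<longrightarrow> B j \<inter> B k = {}) \<and>
     (\<forall>j<5. \<forall>v\<in>B j. (\<exists>u\<in>B ((j + 4) mod 5). E v u) \<and> (\<exists>u\<in>B ((j + 1) mod 5). E v u)) \<and>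
     (\<forall>j<5. anticomplete E (B j) (B ((j + 2) mod 5)))"

definition crossing_P4 :: "('a \<Rightarrow> 'a \<Rightarrow> bool) \<Rightarrow> (nat \<Rightarrow> 'a set) \<Rightarrow> nat \<Rightarrow> bool" where
  "crossing_P4 E B j \<longleftrightarrow>
     (\<exists>a\<in>B j. \<exists>b\<in>B ((j + 1) mod 5). \<exists>c\<in>B ((j + 1) mod 5). \<exists>d\<in>B ((j + 2) mod 5).
        b \<noteq> c \<and> induces_P4 E {a, b, c, d})"

lemma nice_blowup_iff_frame:
  "nice_blowup V E B \<longleftrightarrow> blowup_frame V E B \<and> (\<forall>j<5. \<not> crossing_P4 E B j)"
  unfolding nice_blowup_def blowup_frame_def crossing_P4_def by (simp only: conj_assoc)

lemma blowup_frame_nonadjacent: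
  assumes G: "graph V E" and F: "blowup_frame V E B" and j: "j < 5" and u: "u \<in> B j"
    and v: "v \<in> B ((j + 2) mod 5) \<or> v \<in> B ((j + 3) mod 5)"
  shows "\<not> E u v"
  using v
proof
  assume "v \<in> B ((j + 2) mod 5)"
  then show "\<not> E u v"
    using F j u unfolding blowup_frame_def anticomplete_def by blast
next
  assume "v \<in> B ((j + 3) mod 5)"
  moreover have "((j + 3) mod 5 + 2) mod 5 = j"
    using j by (simp add: mod_simps ac_simps)
  ultimately have "\<not> E v u"
    using F u unfolding blowup_frame_def anticomplete_def
    by (metis mod_less_divisor zero_less_numeral)
  then show "\<not> E u v"
    using graph_sym[OF G] by blast
qed

(* The P_4 a-b-c-d followed by d-y-z-a is an induced C_6: apart from d-y, y-z and z-a, every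
   pair involving y or z lies in blocks at cyclic distance 2. *)
lemma crossing_P4_imp_C6:
  assumes G: "graph V E" and F: "blowup_frame V E B" and j: "j < 5"
    and P: "crossing_P4 E B j"
    and closing: "\<And>a d. a \<in> B j \<Longrightarrow> d \<in> B ((j + 2) mod 5) \<Longrightarrow>
      \<exists>y\<in>B ((j + 3) mod 5). \<exists>z\<in>B ((j + 4) mod 5). E d y \<and> E y z \<and> E z a"
  shows "has_induced_C V E 6"
proof -
  let ?B1 = "B ((j + 1) mod 5)"
  have nonadj: "\<not> E u v" if "k < 5" "u \<in> B k" "v \<in> B ((k + 2) mod 5) \<or> v \<in> B ((k + 3) mod 5)"
    for k u v
    using blowup_frame_nonadjacent[OF G F that] .
  obtain a b c d where a: "a \<in> B j" and bc: "b \<in> ?B1" "c \<in> ?B1" "b \<noteq> c"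
    and d: "d \<in> B ((j + 2) mod 5)" and path: "induces_P4 E {a, b, c, d}"
    using P unfolding crossing_P4_def by blast
  have "\<And>k. k < 5 \<Longrightarrow> B k \<subseteq> V"
    using F unfolding blowup_frame_def by blast
  then have in_V: "\<And>u k. u \<in> B k \<Longrightarrow> k < 5 \<Longrightarrow> u \<in> V"
    by blast
  have C6: "has_induced_C V E 6"
    if b: "b \<in> ?B1" and c: "c \<in> ?B1" and path: "E a b" "E b c" "E c d" "\<not> E a c" "\<not> E b d"
    for b c
  proof -
    obtain y z where y: "y \<in> B ((j + 3) mod 5)" and z: "z \<in> B ((j + 4) mod 5)"
      and closes: "E d y" "E y z" "E z a"
      using closing[OF a d] by blast
    have "\<not> E a d" "\<not> E a y"
      using nonadj[OF j a] d y by auto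
    moreover have "\<not> E b y" "\<not> E b z" "\<not> E c y" "\<not> E c z"
      using nonadj[of "(j + 1) mod 5" b] nonadj[of "(j + 1) mod 5" c] b c y z
      by (simp_all add: mod_simps ac_simps)
    moreover have "\<not> E d z"
      using nonadj[of "(j + 2) mod 5" d] d z by (simp add: mod_simps ac_simps)
    moreover have "{a, b, c, d, y, z} \<subseteq> V"
      using a b c d y z j by (auto intro: in_V)
    ultimately show ?thesis
      using has_induced_C6I[OF G _ path(1-3) closes] path(4,5) by blast
  qed
  have "(j + 1) mod 5 < 5" by simp
  then have "E b c"
    using F bc unfolding blowup_frame_def clique_def by blast
  moreover have "\<not> E a d"
    using nonadj[OF j a] d by blast
  ultimately show ?thesis
    using induces_P4E[OF G path] C6[OF bc(1,2)] C6[OF bc(2,1)] graph_sym[OF G] by metis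
qed

lemma blowup_frame_neighbours:
  assumes "blowup_frame V E B" "j < 5" "v \<in> B j"
  shows "\<exists>u\<in>B ((j + 4) mod 5). E v u" and "\<exists>u\<in>B ((j + 1) mod 5). E v u"
  using assms unfolding blowup_frame_def by blast+

lemma no_crossing_P4_if_hub_opposite:
  assumes G: "graph V E" and F: "blowup_frame V E B" and j: "j < 5"
    and no_C6: "\<not> has_induced_C V E 6"
    and hub: "h \<in> B ((j + 3) mod 5)" "complete E {h} (B ((j + 2) mod 5) \<union> B ((j + 4) mod 5))"
  shows "\<not> crossing_P4 E B j"
proof
  assume "crossing_P4 E B j"
  moreover have "\<exists>y\<in>B ((j + 3) mod 5). \<exists>z\<in>B ((j + 4) mod 5). E d y \<and> E y z \<and> E z a"
    if "a \<in> B j" "d \<in> B ((j + 2) mod 5)" for a d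
  proof -
    obtain z where "z \<in> B ((j + 4) mod 5)" "E a z"
      using blowup_frame_neighbours(1)[OF F j \<open>a \<in> B j\<close>] by blast
    then show ?thesis
      using hub that graph_sym[OF G] unfolding complete_def by blast
  qed
  ultimately show False
    using crossing_P4_imp_C6[OF G F j] no_C6 by blast
qed

lemma no_crossing_P4_if_hub_before:
  assumes G: "graph V E" and F: "blowup_frame V E B" and j: "j < 5"
    and no_C6: "\<not> has_induced_C V E 6"
    and hub: "h \<in> B ((j + 4) mod 5)" "complete E {h} (B ((j + 3) mod 5) \<union> B j)"
  shows "\<not> crossing_P4 E B j"
proof
  assume "crossing_P4 E B j"
  moreover have "\<exists>y\<in>B ((j + 3) mod 5). \<exists>z\<in>B ((j + 4) mod 5). E d y \<and> E y z \<and> E z a"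
    if "a \<in> B j" "d \<in> B ((j + 2) mod 5)" for a d
  proof -
    obtain y where "y \<in> B ((j + 3) mod 5)" "E d y"
      using blowup_frame_neighbours(2)[OF F _ \<open>d \<in> B ((j + 2) mod 5)\<close>]
      by (auto simp: mod_simps ac_simps)
    then show ?thesis
      using hub that graph_sym[OF G] unfolding complete_def by blast
  qed
  ultimately show False
    using crossing_P4_imp_C6[OF G F j] no_C6 by blast
qed

lemma blowup_frame_insert:
  assumes G: "graph V E" and F: "blowup_frame V E B" and k: "k < 5"
    and x: "x \<in> V" "x \<notin> VH B" and x_k: "\<forall>u\<in>B k. E x u"
    and x_before: "\<exists>u\<in>B ((k + 4) mod 5). E x u" and x_after: "\<exists>u\<in>B ((k + 1) mod 5). E x u"
    and x_far: "\<forall>u\<in>B ((k + 2) mod 5) \<union> B ((k + 3) mod 5). \<not> E x u"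
  shows "blowup_frame V E (B(k := insert x (B k)))" (is "blowup_frame V E ?B'")
proof -
  have F1: "\<forall>j<5. B j \<subseteq> V \<and> clique E (B j)"
    and F2: "\<forall>j<5. \<forall>l<5. j \<noteq> l \<longrightarrow> B j \<inter> B l = {}"
    and F3: "\<forall>j<5. \<forall>v\<in>B j. (\<exists>u\<in>B ((j + 4) mod 5). E v u) \<and> (\<exists>u\<in>B ((j + 1) mod 5). E v u)"
    and F4: "\<forall>j<5. anticomplete E (B j) (B ((j + 2) mod 5))"
    using F unfolding blowup_frame_def by blast+
  have old: "B j \<subseteq> ?B' j" for j
    by auto
  have x_outside: "x \<notin> B j" if "j < 5" for j
    using x(2) that unfolding VH_def by blast
  have "\<forall>j<5. ?B' j \<subseteq> V \<and> clique E (?B' j)"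
    using F1 x(1) x_k graph_sym[OF G] unfolding clique_def by auto
  moreover have "\<forall>j<5. \<forall>l<5. j \<noteq> l \<longrightarrow> ?B' j \<inter> ?B' l = {}"
    using F2 x_outside by auto
  moreover have "\<forall>j<5. \<forall>v\<in>?B' j. (\<exists>u\<in>?B' ((j + 4) mod 5). E v u) \<and> (\<exists>u\<in>?B' ((j + 1) mod 5). E v u)"
  proof (intro allI impI ballI)
    fix j v assume j: "j < 5" and v: "v \<in> ?B' j"
    then have "v \<in> B j \<or> (j = k \<and> v = x)"
      by (auto split: if_splits)
    then show "(\<exists>u\<in>?B' ((j + 4) mod 5). E v u) \<and> (\<exists>u\<in>?B' ((j + 1) mod 5). E v u)"
      using F3 j x_before x_after old by blast
  qed
  moreover have "\<forall>j<5. anticomplete E (?B' j) (?B' ((j + 2) mod 5))"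
  proof (intro allI impI)
    fix j :: nat assume j: "j < 5"
    have "(k + 2) mod 5 \<noteq> k"
      using add_mod_5_inj[of k 2 0] by auto
    moreover have "j = (k + 3) mod 5" if "(j + 2) mod 5 = k"
      using add_mod_5_inj[of 2 j "(k + 3) mod 5"] j k that by (simp add: mod_simps ac_simps)
    ultimately show "anticomplete E (?B' j) (?B' ((j + 2) mod 5))"
      using F4 j x_far graph_sym[OF G] unfolding anticomplete_def by auto
  qed
  ultimately show ?thesis
    unfolding blowup_frame_def by (intro conjI)
qed

definition shift5 :: "nat \<Rightarrow> (nat \<Rightarrow> 'b) \<Rightarrow> nat \<Rightarrow> 'b" where
  "shift5 i f j = f ((i + j) mod 5)"

lemma shift5_add_mod: "shift5 i f ((j + k) mod 5) = f (((i + j) mod 5 + k) mod 5)"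
  unfolding shift5_def by (simp add: mod_simps ac_simps)

lemma shift5_windows:
  assumes "\<forall>j<5. P (f j) (f ((j + 1) mod 5)) (f ((j + 2) mod 5)) (f ((j + 4) mod 5))"
  shows "\<forall>j<5. P (shift5 i f j) (shift5 i f ((j + 1) mod 5)) (shift5 i f ((j + 2) mod 5))
    (shift5 i f ((j + 4) mod 5))"
proof (intro allI impI)
  fix j :: nat
  have "(i + j) mod 5 < 5" by simp
  then show "P (shift5 i f j) (shift5 i f ((j + 1) mod 5)) (shift5 i f ((j + 2) mod 5))
    (shift5 i f ((j + 4) mod 5))"
    using assms unfolding shift5_add_mod by (simp add: shift5_def)
qed

lemma nice_blowup_shift5:
  assumes "nice_blowup V E B"
  shows "nice_blowup V E (shift5 i B)"
proof -
  have "\<forall>j<5. \<forall>k<5. j \<noteq> k \<longrightarrow> shift5 i B j \<inter> shift5 i B k = {}"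
    using assms add_mod_5_inj[of i] mod_less_divisor[of 5]
    unfolding nice_blowup_def shift5_def by (metis zero_less_numeral)
  then show ?thesis
    using assms unfolding nice_blowup_def
    by (intro conjI shift5_windows) simp_all
qed

lemma VH_shift5 [simp]: "VH (shift5 i B) = VH B"
proof
  show "VH (shift5 i B) \<subseteq> VH B"
    using mod_less_divisor[of 5] unfolding VH_def shift5_def by fastforce
  show "VH B \<subseteq> VH (shift5 i B)"
  proof
    fix v assume "v \<in> VH B"
    then obtain k where "k < 5" "v \<in> B k"
      unfolding VH_def by blast
    then have "v \<in> shift5 i B ((k + 4 * i) mod 5)"
      unfolding shift5_def by (simp add: mod_simps ac_simps)
    then show "v \<in> VH (shift5 i B)"
      unfolding VH_def by fastforce
  qed
qed

lemma maximal_nice_blowup_shift5: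
  "maximal_nice_blowup V E B \<Longrightarrow> maximal_nice_blowup V E (shift5 i B)"
  unfolding maximal_nice_blowup_def by (simp add: nice_blowup_shift5)

lemma A3_shift5:
  assumes i: "i < 5" and x: "x \<in> A3 V E B i"
  shows "x \<in> A3 V E (shift5 i B) 0"
proof -
  have "supp E (shift5 i B) x = {j. j < 5 \<and> (i + j) mod 5 \<in> supp E B x}"
    unfolding supp_def shift5_def by auto
  also have "\<dots> = {4, 0, 1}"
    using x add_mod_5_inj[of i _ 4] add_mod_5_inj[of i _ 0] add_mod_5_inj[of i _ 1]
    unfolding A3_def by auto
  finally show ?thesis
    using x unfolding A3_def by simp
qed

locale A3_vertex =
  fixes V :: "'a set" and E :: "'a \<Rightarrow> 'a \<Rightarrow> bool" and B :: "nat \<Rightarrow> 'a set"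
    and q :: "nat \<Rightarrow> 'a" and x :: 'a
  assumes graph: "graph V E"
    and no_C4: "\<not> has_induced_C V E 4"
    and no_C6: "\<not> has_induced_C V E 6"
    and maximal: "maximal_nice_blowup V E B"
    and hubs: "\<forall>j<5. q j \<in> B j \<and> complete E {q j} (B ((j + 4) mod 5) \<union> B ((j + 1) mod 5))"
    and x_A3: "x \<in> A3 V E B 0"
begin

lemma frame: "blowup_frame V E B"
  and no_crossing_P4: "j < 5 \<Longrightarrow> \<not> crossing_P4 E B j"
  using maximal by (simp_all add: maximal_nice_blowup_def nice_blowup_iff_frame)

lemma E_sym: "E u v \<longleftrightarrow> E v u"
  using graph_sym[OF graph] .

lemma block_in_V: "u \<in> B j \<Longrightarrow> j < 5 \<Longrightarrow> u \<in> V"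
  using frame unfolding blowup_frame_def by blast

lemma block_clique: "u \<in> B j \<Longrightarrow> v \<in> B j \<Longrightarrow> j < 5 \<Longrightarrow> u \<noteq> v \<Longrightarrow> E u v"
  using frame unfolding blowup_frame_def clique_def by blast

lemma block_disjoint: "u \<in> B j \<Longrightarrow> u \<in> B k \<Longrightarrow> j < 5 \<Longrightarrow> k < 5 \<Longrightarrow> j = k"
  using frame unfolding blowup_frame_def by (meson disjoint_iff)

(* simp turns (0 + 2) mod 5 into Suc (Suc 0) and 1 into Suc 0; numeral_2_eq_2 brings the
   literal 2 into the same normal form. *)

lemma block_nonadjacent:
  "u \<in> B 0 \<Longrightarrow> v \<in> B 2 \<or> v \<in> B 3 \<Longrightarrow> \<not> E u v"
  "u \<in> B 1 \<Longrightarrow> v \<in> B 3 \<or> v \<in> B 4 \<Longrightarrow> \<not> E u v"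
  "u \<in> B 2 \<Longrightarrow> v \<in> B 4 \<or> v \<in> B 0 \<Longrightarrow> \<not> E u v"
  "u \<in> B 3 \<Longrightarrow> v \<in> B 0 \<or> v \<in> B 1 \<Longrightarrow> \<not> E u v"
  "u \<in> B 4 \<Longrightarrow> v \<in> B 1 \<or> v \<in> B 2 \<Longrightarrow> \<not> E u v"
  using blowup_frame_nonadjacent[OF graph frame, of 0 u v]
    blowup_frame_nonadjacent[OF graph frame, of 1 u v]
    blowup_frame_nonadjacent[OF graph frame, of 2 u v]
    blowup_frame_nonadjacent[OF graph frame, of 3 u v]
    blowup_frame_nonadjacent[OF graph frame, of 4 u v]
  by (simp_all add: numeral_2_eq_2)

lemma hub_in_block: "q 0 \<in> B 0" "q 1 \<in> B 1" "q 2 \<in> B 2" "q 3 \<in> B 3" "q 4 \<in> B 4"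
  using hubs unfolding all_less_5 by simp_all

lemma hub_complete:
  "complete E {q 0} (B 4 \<union> B 1)" "complete E {q 1} (B 0 \<union> B 2)"
  "complete E {q 2} (B 1 \<union> B 3)" "complete E {q 3} (B 2 \<union> B 4)"
  "complete E {q 4} (B 3 \<union> B 0)"
  using hubs unfolding all_less_5 by (simp_all add: numeral_2_eq_2)

lemma hub_adjacent:
  "u \<in> B 4 \<or> u \<in> B 1 \<Longrightarrow> E (q 0) u \<and> E u (q 0)"
  "u \<in> B 0 \<or> u \<in> B 2 \<Longrightarrow> E (q 1) u \<and> E u (q 1)"
  "u \<in> B 1 \<or> u \<in> B 3 \<Longrightarrow> E (q 2) u \<and> E u (q 2)"
  "u \<in> B 2 \<or> u \<in> B 4 \<Longrightarrow> E (q 3) u \<and> E u (q 3)"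
  "u \<in> B 3 \<or> u \<in> B 0 \<Longrightarrow> E (q 4) u \<and> E u (q 4)"
  using hub_complete unfolding complete_def by (simp_all add: E_sym)

lemma x_in_V: "x \<in> V" and x_notin_VH: "x \<notin> VH B"
  using x_A3 unfolding A3_def by auto

lemma x_notin_block: "j < 5 \<Longrightarrow> x \<notin> B j"
  using x_notin_VH unfolding VH_def by blast

lemma x_support: "j < 5 \<Longrightarrow> (\<exists>u\<in>B j. E x u) \<longleftrightarrow> j = 4 \<or> j = 0 \<or> j = 1"
  using x_A3 unfolding A3_def supp_def by (auto simp: set_eq_iff)

lemma x_neighbours: "\<exists>u\<in>B 4. E x u" "\<exists>u\<in>B 0. E x u" "\<exists>u\<in>B 1. E x u"
  using x_support[of 4] x_support[of 0] x_support[of 1] by simp_all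

lemma x_nonadjacent: "u \<in> B 2 \<or> u \<in> B 3 \<Longrightarrow> \<not> E x u \<and> \<not> E u x"
  using x_support[of 2] x_support[of 3] E_sym by auto

(* q 1 and q 4 need not be adjacent to x, but the hubs of blocks 0, 2 and 3 survive the
   insertion, and they cover all five triples. *)
lemma no_crossing_P4_insert_x:
  assumes frame': "blowup_frame V E (B(0 := insert x (B 0)))"
  shows "\<forall>j<5. \<not> crossing_P4 E (B(0 := insert x (B 0))) j"
  using no_crossing_P4_if_hub_opposite[OF graph frame' _ no_C6, of 0 "q 3"]
    no_crossing_P4_if_hub_before[OF graph frame' _ no_C6, of 1 "q 0"]
    no_crossing_P4_if_hub_opposite[OF graph frame' _ no_C6, of 2 "q 0"]
    no_crossing_P4_if_hub_before[OF graph frame' _ no_C6, of 3 "q 2"]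
    no_crossing_P4_if_hub_opposite[OF graph frame' _ no_C6, of 4 "q 2"]
    hub_in_block hub_complete
  unfolding all_less_5 by (simp add: numeral_2_eq_2)

lemma x_not_complete_to_B0: "\<exists>a\<in>B 0. \<not> E x a"
proof (rule ccontr)
  assume "\<not> (\<exists>a\<in>B 0. \<not> E x a)"
  then have frame': "blowup_frame V E (B(0 := insert x (B 0)))" (is "blowup_frame V E ?B'")
    using blowup_frame_insert[OF graph frame _ x_in_V x_notin_VH] x_neighbours x_nonadjacent
    by (simp add: numeral_2_eq_2)
  then have "nice_blowup V E ?B'"
    using no_crossing_P4_insert_x[OF frame'] by (simp add: nice_blowup_iff_frame)
  moreover have "VH B \<subseteq> VH ?B'"
    unfolding VH_def by (rule UN_mono) auto
  moreover have "x \<in> VH ?B'"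
    unfolding VH_def by auto
  ultimately show False
    using maximal x_notin_VH unfolding maximal_nice_blowup_def by blast
qed

context
  assumes hyp: "anticomplete E (B 0 - nbhd V E x) (B 1 \<inter> nbhd V E x)"
begin

lemma hypD:
  assumes "a \<in> B 0" "\<not> E x a" "c \<in> B 1" "E x c"
  shows "\<not> E a c"
proof -
  have "a \<in> B 0 - nbhd V E x" "c \<in> B 1 \<inter> nbhd V E x"
    using assms block_in_V[of c 1] unfolding nbhd_def by auto
  then show ?thesis
    using hyp unfolding anticomplete_def by blast
qed

lemma x_nonadjacent_q1: "\<not> E x (q 1)"
proof
  assume "E x (q 1)"
  obtain a where "a \<in> B 0" "\<not> E x a"
    using x_not_complete_to_B0 by blast
  then show False
    using hypD[OF _ _ hub_in_block(2) \<open>E x (q 1)\<close>] hub_adjacent(2) by blast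
qed

lemma x_adjacent_q0: "E x (q 0)"
proof (rule ccontr)
  assume "\<not> E x (q 0)"
  obtain c where "c \<in> B 1" "E x c"
    using x_neighbours(3) by blast
  then show False
    using hypD[OF hub_in_block(1) \<open>\<not> E x (q 0)\<close>] hub_adjacent(1) by blast
qed

lemma adjacent_B0_B1:
  assumes b: "b \<in> B 0" "E x b" and c: "c \<in> B 1" "E x c"
  shows "E b c"
proof (rule ccontr)
  assume "\<not> E b c"
  have "{b, x, c, q 1} \<subseteq> V"
    using b c x_in_V hub_in_block(2) block_in_V by auto
  moreover have "b \<noteq> c" "x \<noteq> q 1"
    using b c block_disjoint[of b 0 1] x_notin_block[of 1] hub_in_block(2) by auto
  moreover have "E b x" "E x c" "E c (q 1)" "E (q 1) b"
    using b c x_nonadjacent_q1 hub_in_block(2) hub_adjacent(2) block_clique[of c 1 "q 1"] E_sym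
    by auto
  moreover note \<open>\<not> E b c\<close> x_nonadjacent_q1
  ultimately have "has_induced_C V E 4"
    by (rule has_induced_C4I[OF graph])
  then show False
    using no_C4 by blast
qed

lemma adjacent_B0_B4:
  assumes b: "b \<in> B 0" "E x b" and w: "w \<in> B 4" "E x w"
  shows "E b w"
proof (rule ccontr)
  assume "\<not> E b w"
  have "{x, w, q 3, q 2, q 1, b} \<subseteq> V"
    using b w x_in_V hub_in_block block_in_V by auto
  moreover have "E x w" "E w (q 3)" "E (q 3) (q 2)" "E (q 2) (q 1)" "E (q 1) b" "E b x"
    using b w hub_in_block(2,3) hub_adjacent(2,3,4) E_sym by blast+
  moreover have "\<not> E x (q 3)" "\<not> E x (q 2)" "\<not> E x (q 1)"
    using x_nonadjacent hub_in_block(3,4) x_nonadjacent_q1 by blast+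
  moreover have "\<not> E w (q 2)" "\<not> E w (q 1)" "\<not> E w b"
    using w hub_in_block(2,3) block_nonadjacent(5) \<open>\<not> E b w\<close> E_sym by blast+
  moreover have "\<not> E (q 3) (q 1)" "\<not> E (q 3) b" "\<not> E (q 2) b"
    using b hub_in_block(2,3,4) block_nonadjacent(3,4) by blast+
  ultimately have "has_induced_C V E 6"
    by (rule has_induced_C6I[OF graph])
  then show False
    using no_C6 by blast
qed

lemma B0_neighbourhood_mono:
  assumes a: "a \<in> B 0" "\<not> E x a" and b: "b \<in> B 0" "E x b"
    and u: "u \<in> B 4 \<union> B 1" "E a u"
  shows "E b u"
proof (rule ccontr)
  assume "\<not> E b u"
  obtain c where c: "c \<in> B 1" "E x c"
    using x_neighbours(3) by blast
  have "a \<noteq> b"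
    using a b by blast
  then have "E a b"
    using a b block_clique by simp
  have "E b c" "\<not> E a c"
    using adjacent_B0_B1[OF b c] hypD[OF a c] .
  consider "u \<in> B 4" | "u \<in> B 1"
    using u by blast
  then show False
  proof cases
    case 1
    have "E u a" "\<not> E u b" "\<not> E u c"
      using 1 c u(2) \<open>\<not> E b u\<close> block_nonadjacent(5) E_sym by blast+
    then have "induces_P4 E {u, a, b, c}"
      using \<open>E a b\<close> \<open>E b c\<close> \<open>\<not> E a c\<close> by (intro induces_P4I[OF graph])
    then have "crossing_P4 E B 4"
      unfolding crossing_P4_def using 1 a b c \<open>a \<noteq> b\<close> by auto
    then show False
      using no_crossing_P4 by simp
  next
    case 2
    have "\<not> E x u"
      using hypD[OF a 2] u(2) by blast
    have "{a, b, c, u} \<subseteq> V"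
      using a b c 2 block_in_V by auto
    moreover have "a \<noteq> c" "b \<noteq> u"
      using a b c 2 block_disjoint[of _ 0 1] by auto
    moreover note \<open>E a b\<close> \<open>E b c\<close>
    moreover have "E c u" "E u a"
      using 2 c u(2) \<open>\<not> E x u\<close> block_clique[of c 1 u] E_sym by auto
    moreover note \<open>\<not> E a c\<close> \<open>\<not> E b u\<close>
    ultimately have "has_induced_C V E 4"
      by (rule has_induced_C4I[OF graph])
    then show False
      using no_C4 by blast
  qed
qed

lemma B4_neighbourhood_mono:
  assumes a: "a \<in> B 4" "\<not> E x a" and b: "b \<in> B 4" "E x b"
    and u: "u \<in> B 3 \<union> B 0" "E a u"
  shows "E b u"
proof (rule ccontr)
  assume "\<not> E b u"
  obtain c where c: "c \<in> B 1" "E x c"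
    using x_neighbours(3) by blast
  have "a \<noteq> b"
    using a b by blast
  then have path: "E u a" "E a b" "E b x" "E x c"
    using a b c u(2) block_clique E_sym by simp_all
  have far: "\<not> E u b" "\<not> E a x" "\<not> E a c" "\<not> E b c"
    using a b c \<open>\<not> E b u\<close> block_nonadjacent(5) E_sym by blast+
  consider "u \<in> B 0" "E x u" | "u \<in> B 0" "\<not> E x u" | "u \<in> B 3"
    using u by blast
  then show False
  proof cases
    case 1
    then show False
      using adjacent_B0_B4[OF 1 b] \<open>\<not> E b u\<close> E_sym by blast
  next
    case 2
    obtain d where d: "d \<in> B 1" "E u d"
      using blowup_frame_neighbours(2)[OF frame _ \<open>u \<in> B 0\<close>] by auto
    have "\<not> E x d" "\<not> E u c"
      using hypD[OF 2] d c by blast+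
    have "{u, a, b, x, c, d} \<subseteq> V"
      using a b c d 2 x_in_V block_in_V by auto
    moreover have "E c d" "E d u"
      using c d \<open>\<not> E x d\<close> block_clique[of c 1 d] E_sym by auto
    moreover have "\<not> E u x" "\<not> E a d" "\<not> E b d"
      using a b d 2 block_nonadjacent(5) E_sym by blast+
    ultimately have "has_induced_C V E 6"
      using path far \<open>\<not> E x d\<close> \<open>\<not> E u c\<close>
      by (intro has_induced_C6I[OF graph, of u a b x c d]) auto
    then show False
      using no_C6 by blast
  next
    case 3
    have "{u, a, b, x, c, q 2} \<subseteq> V"
      using a b c 3 x_in_V hub_in_block(3) block_in_V by auto
    moreover have "E c (q 2)" "E (q 2) u"
      using 3 c hub_adjacent(3) by blast+
    moreover have "\<not> E u x" "\<not> E u c" "\<not> E a (q 2)" "\<not> E b (q 2)" "\<not> E x (q 2)"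
      using 3 a b c hub_in_block(3) block_nonadjacent(4,5) x_nonadjacent by blast+
    ultimately have "has_induced_C V E 6"
      using path far by (intro has_induced_C6I[OF graph, of u a b x c "q 2"]) auto
    then show False
      using no_C6 by blast
  qed
qed

lemma lemma8p1_at_0:
  "(q 0 \<in> B 0 \<inter> nbhd V E x \<and> q 1 \<in> B 1 - nbhd V E x)
    \<and> (\<forall>j \<in> {4, 1}. complete E (B 0 \<inter> nbhd V E x) (B j \<inter> nbhd V E x))
    \<and> (\<forall>a \<in> B 0 - nbhd V E x. \<forall>b \<in> B 0 \<inter> nbhd V E x.
          nbhd V E a \<inter> (B 4 \<union> B 1) \<subset> nbhd V E b \<inter> (B 4 \<union> B 1))
    \<and> (\<forall>a \<in> B 4 - nbhd V E x. \<forall>b \<in> B 4 \<inter> nbhd V E x.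
          nbhd V E a \<inter> (B 3 \<union> B 0) \<subseteq> nbhd V E b \<inter> (B 3 \<union> B 0))
    \<and> (\<exists>b \<in> B 4 \<inter> nbhd V E x. complete E {b} (B 3 \<union> B 0))"
proof (intro conjI ballI)
  show "q 0 \<in> B 0 \<inter> nbhd V E x" "q 1 \<in> B 1 - nbhd V E x"
    using hub_in_block(1,2) x_adjacent_q0 x_nonadjacent_q1 block_in_V[of "q 0" 0]
    unfolding nbhd_def by auto
next
  fix j :: nat assume "j \<in> {4, 1}"
  then show "complete E (B 0 \<inter> nbhd V E x) (B j \<inter> nbhd V E x)"
    using adjacent_B0_B4 adjacent_B0_B1 unfolding complete_def nbhd_def by auto
next
  fix a b assume a: "a \<in> B 0 - nbhd V E x" and b: "b \<in> B 0 \<inter> nbhd V E x"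
  then have a': "a \<in> B 0" "\<not> E x a" and b': "b \<in> B 0" "E x b"
    using block_in_V[of a 0] unfolding nbhd_def by auto
  obtain c where c: "c \<in> B 1" "E x c"
    using x_neighbours(3) by blast
  have "c \<in> nbhd V E b" "c \<notin> nbhd V E a"
    using adjacent_B0_B1[OF b' c] hypD[OF a' c] block_in_V[of c 1] c(1)
    unfolding nbhd_def by auto
  moreover have "nbhd V E a \<inter> (B 4 \<union> B 1) \<subseteq> nbhd V E b \<inter> (B 4 \<union> B 1)"
    using B0_neighbourhood_mono[OF a' b'] unfolding nbhd_def by auto
  ultimately show "nbhd V E a \<inter> (B 4 \<union> B 1) \<subset> nbhd V E b \<inter> (B 4 \<union> B 1)"
    using c(1) by blast
next
  fix a b assume "a \<in> B 4 - nbhd V E x" "b \<in> B 4 \<inter> nbhd V E x"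
  then have "a \<in> B 4" "\<not> E x a" "b \<in> B 4" "E x b"
    using block_in_V[of a 4] unfolding nbhd_def by auto
  then show "nbhd V E a \<inter> (B 3 \<union> B 0) \<subseteq> nbhd V E b \<inter> (B 3 \<union> B 0)"
    using B4_neighbourhood_mono unfolding nbhd_def by auto
next
  obtain w where w: "w \<in> B 4" "E x w"
    using x_neighbours(1) by blast
  show "\<exists>b \<in> B 4 \<inter> nbhd V E x. complete E {b} (B 3 \<union> B 0)"
  proof (cases "E x (q 4)")
    case True
    then show ?thesis
      using hub_in_block(5) hub_complete(5) block_in_V[of "q 4" 4] unfolding nbhd_def by auto
  next
    case False
    then have "complete E {w} (B 3 \<union> B 0)"
      using B4_neighbourhood_mono[OF hub_in_block(5) False w] hub_adjacent(5)
      unfolding complete_def by blast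
    then show ?thesis
      using w block_in_V[of w 4] unfolding nbhd_def by auto
  qed
qed

end

end

theorem lemma8p1:
  fixes V :: "'a set" and E :: "'a \<Rightarrow> 'a \<Rightarrow> bool"
    and B :: "nat \<Rightarrow> 'a set" and q :: "nat \<Rightarrow> 'a" and i :: nat and x :: 'a
  assumes G: "graph V E"
    and noP7: "\<not> has_induced_P V E 7"
    and noC4: "\<not> has_induced_C V E 4"
    and noC6: "\<not> has_induced_C V E 6"
    and noC7: "\<not> has_induced_C V E 7"
    and H: "maximal_nice_blowup V E B"
    and q: "\<forall>j<5. q j \<in> B j \<and> complete E {q j} (B ((j + 4) mod 5) \<union> B ((j + 1) mod 5))"
    and i: "i < 5"
    and x: "x \<in> A3 V E B i"
    and hyp: "anticomplete E (B i - nbhd V E x) (B ((i + 1) mod 5) \<inter> nbhd V E x)"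
  shows "(q i \<in> B i \<inter> nbhd V E x \<and> q ((i + 1) mod 5) \<in> B ((i + 1) mod 5) - nbhd V E x)
    \<and> (\<forall>j \<in> {(i + 4) mod 5, (i + 1) mod 5}.
          complete E (B i \<inter> nbhd V E x) (B j \<inter> nbhd V E x))
    \<and> (\<forall>a \<in> B i - nbhd V E x. \<forall>b \<in> B i \<inter> nbhd V E x.
          nbhd V E a \<inter> (B ((i + 4) mod 5) \<union> B ((i + 1) mod 5))
          \<subset> nbhd V E b \<inter> (B ((i + 4) mod 5) \<union> B ((i + 1) mod 5)))
    \<and> (\<forall>a \<in> B ((i + 4) mod 5) - nbhd V E x. \<forall>b \<in> B ((i + 4) mod 5) \<inter> nbhd V E x.
          nbhd V E a \<inter> (B ((i + 3) mod 5) \<union> B i)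
          \<subseteq> nbhd V E b \<inter> (B ((i + 3) mod 5) \<union> B i))
    \<and> (\<exists>b \<in> B ((i + 4) mod 5) \<inter> nbhd V E x. complete E {b} (B ((i + 3) mod 5) \<union> B i))"
proof -
  have hubs: "\<forall>j<5. shift5 i q j \<in> shift5 i B j
      \<and> complete E {shift5 i q j} (shift5 i B ((j + 4) mod 5) \<union> shift5 i B ((j + 1) mod 5))"
  proof (intro allI impI)
    fix j :: nat
    have "(i + j) mod 5 < 5" by simp
    then show "shift5 i q j \<in> shift5 i B j
        \<and> complete E {shift5 i q j} (shift5 i B ((j + 4) mod 5) \<union> shift5 i B ((j + 1) mod 5))"
      using q unfolding shift5_add_mod by (simp add: shift5_def)
  qed
  interpret A3_vertex V E "shift5 i B" "shift5 i q" x
    using G noC4 noC6 maximal_nice_blowup_shift5[OF H] hubs A3_shift5[OF i x]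
    by (rule A3_vertex.intro)
  have "anticomplete E (shift5 i B 0 - nbhd V E x) (shift5 i B 1 \<inter> nbhd V E x)"
    using hyp i by (simp add: shift5_def)
  then show ?thesis
    using lemma8p1_at_0 i by (simp add: shift5_def)
qed

end
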